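(* Let $a\in\mathbb{C}$ with $|a|<1$, and let $\delta_x=x\frac{d}{dx}$. Then there exists a unique function $U(x)$, holomorphic in some neighbourhood of $x=0$ with $U(0)=0$, solving $$(\delta_x^2+a^2)U=x(1+U)^3+(\delta_xU)^2-U\,\delta_x^2U.$$
   Context: This equation is obtained from the degenerate third Painlevé equation $u''=\frac{(u')^2}{u}-\frac{u'}{\tau}+\frac1\tau(-8u^2+2a^2)+\frac{a^2}{u}$ by the substitution $u(\tau)=-\frac{\tau}{2}(1+U(x))$, $x=\tau^2$. *)

theory Defs
  imports "HOL-Complex_Analysis.Complex_Analysis"
begin

definition euler_op :: "(complex \<Rightarrow> complex) \<Rightarrow> complex \<Rightarrow> complex" where
  "euler_op f = (\<lambda>x. x * deriv f x)"

definition solves_eq :: "complex \<Rightarrow> (complex \<Rightarrow> complex) \<Rightarrow> complex set \<Rightarrow> bool" where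
  "solves_eq a U S \<longleftrightarrow> (\<forall>x\<in>S.
     euler_op (euler_op U) x + a^2 * U x
       = x * (1 + U x)^3 + (euler_op U x)^2 - U x * euler_op (euler_op U) x)"

end

theory Submission
  imports Defs
begin

text \<open>Writing \<open>U = (\<Sum>n. u\<^sub>n x\<^sup>n)\<close>, the coefficient of \<open>x\<^sup>n\<close> in the equation reads
  \<open>(n\<^sup>2 + a\<^sup>2) u\<^sub>n = [(1 + U)\<^sup>3]\<^sub>n\<^sub>-\<^sub>1 + (\<Sum>i + j = n. (i j - j\<^sup>2) u\<^sub>i u\<^sub>j)\<close>.
  As \<open>u\<^sub>0 = 0\<close>, the right-hand side only involves \<open>u\<^sub>k\<close> with \<open>k < n\<close>, and \<open>n\<^sup>2 + a\<^sup>2 \<noteq> 0\<close>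
  for \<open>|a| < 1\<close>; so the Taylor coefficients of a solution are determined recursively.
  The majorant \<open>|u\<^sub>n| \<le> D M\<^sup>n / n\<^sup>2\<close> survives the recursion because
  \<open>(\<Sum>i + j = n. 1 / (i\<^sup>2 j\<^sup>2)) \<le> 8 / n\<^sup>2\<close> compensates the factor \<open>n\<^sup>2\<close> in the quadratic terms,
  so the formal solution converges near \<open>0\<close>. A holomorphic solution on a disc is the sum
  of its Taylor series there, hence equal to the formal one.\<close>

unbundle no vec_syntax

definition fps_euler :: "complex fps \<Rightarrow> complex fps" where
  "fps_euler F = fps_X * fps_deriv F"

lemma fps_euler_nth [simp]: "fps_euler F $ n = of_nat n * F $ n"
  by (cases n) (simp_all add: fps_euler_def)

definition ode_lhs :: "complex \<Rightarrow> (complex \<Rightarrow> complex) \<Rightarrow> complex \<Rightarrow> complex" where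
  "ode_lhs a U x = euler_op (euler_op U) x + a^2 * U x"

definition ode_rhs :: "(complex \<Rightarrow> complex) \<Rightarrow> complex \<Rightarrow> complex" where
  "ode_rhs U x = x * (1 + U x)^3 + (euler_op U x)^2 - U x * euler_op (euler_op U) x"

lemma solves_eq_iff: "solves_eq a U S \<longleftrightarrow> (\<forall>x\<in>S. ode_lhs a U x = ode_rhs U x)"
  by (simp add: solves_eq_def ode_lhs_def ode_rhs_def)

definition fps_ode_lhs :: "complex \<Rightarrow> complex fps \<Rightarrow> complex fps" where
  "fps_ode_lhs a F = fps_euler (fps_euler F) + fps_const (a^2) * F"

definition fps_ode_rhs :: "complex fps \<Rightarrow> complex fps" where
  "fps_ode_rhs F = fps_X * (1 + F)^3 + (fps_euler F)^2 - F * fps_euler (fps_euler F)"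

subsection \<open>The formal solution\<close>

lemma fps_ode_lhs_nth: "fps_ode_lhs a F $ n = (of_nat n ^ 2 + a ^ 2) * F $ n"
  by (simp add: fps_ode_lhs_def power2_eq_square algebra_simps)

lemma fps_ode_rhs_nth:
  "fps_ode_rhs F $ n = (if n = 0 then 0 else ((1 + F)^3) $ (n - 1)) +
     (\<Sum>i\<le>n. (of_nat i * of_nat (n - i) - of_nat (n - i) ^ 2) * F $ i * F $ (n - i))"
proof -
  have "((fps_euler F)^2 - F * fps_euler (fps_euler F)) $ n =
        (\<Sum>i\<le>n. of_nat i * of_nat (n - i) * F $ i * F $ (n - i)) -
        (\<Sum>i\<le>n. of_nat (n - i) ^ 2 * F $ i * F $ (n - i))"
    by (simp add: power2_eq_square fps_mult_nth atLeast0AtMost algebra_simps)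
  also have "\<dots> = (\<Sum>i\<le>n. (of_nat i * of_nat (n - i) - of_nat (n - i) ^ 2) * F $ i * F $ (n - i))"
    by (simp only: sum_subtractf[symmetric] left_diff_distrib)
  finally show ?thesis
    by (simp add: fps_ode_rhs_def diff_add_eq[symmetric] add_diff_eq[symmetric])
qed

lemma fps_cutoff_power_cutoff: "fps_cutoff n (fps_cutoff n f ^ k) = fps_cutoff n (f ^ k)"
proof (induction k)
  case (Suc k)
  have "fps_cutoff n (fps_cutoff n f * fps_cutoff n f ^ k) = fps_cutoff n (f * fps_cutoff n (fps_cutoff n f ^ k))"
    by (simp add: fps_eq_iff fps_cutoff_left_mult_nth fps_cutoff_right_mult_nth)
  also have "\<dots> = fps_cutoff n (f * f ^ k)"
    by (simp add: Suc.IH fps_eq_iff fps_cutoff_right_mult_nth)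
  finally show ?case by simp
qed simp

text \<open>Only the summands \<open>i = 0\<close> and \<open>i = n\<close> of the quadratic part involve \<open>F $ n\<close>;
  both vanish when \<open>F $ 0 = 0\<close>.\<close>

lemma fps_ode_rhs_cutoff:
  assumes "F $ 0 = 0"
  shows "fps_ode_rhs (fps_cutoff n F) $ n = fps_ode_rhs F $ n"
proof -
  have "((1 + fps_cutoff n F)^3) $ (n - 1) = ((1 + F)^3) $ (n - 1)" if "n > 0"
  proof -
    have "1 + fps_cutoff n F = fps_cutoff n (1 + F)"
      using that by (simp add: fps_cutoff_add fps_cutoff_one)
    hence "fps_cutoff n ((1 + fps_cutoff n F)^3) = fps_cutoff n ((1 + F)^3)"
      by (simp add: fps_cutoff_power_cutoff)
    thus ?thesis
      using that by (metis diff_less fps_cutoff_nth zero_less_one)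
  qed
  moreover have "(\<Sum>i\<le>n. (of_nat i * of_nat (n - i) - of_nat (n - i) ^ 2) * fps_cutoff n F $ i * fps_cutoff n F $ (n - i)) =
        (\<Sum>i\<le>n. (of_nat i * of_nat (n - i) - of_nat (n - i) ^ 2) * F $ i * F $ (n - i))"
  proof (rule sum.cong)
    fix i assume "i \<in> {..n}"
    thus "(of_nat i * of_nat (n - i) - of_nat (n - i) ^ 2) * fps_cutoff n F $ i * fps_cutoff n F $ (n - i) =
          (of_nat i * of_nat (n - i) - of_nat (n - i) ^ 2) * F $ i * F $ (n - i)"
      using assms by (cases "i = 0 \<or> i = n") auto
  qed simp
  ultimately show ?thesis
    by (simp add: fps_ode_rhs_nth)
qed

lemma norm_of_nat_sq_add_sq_ge:
  "(real n)^2 * (1 - (norm a)^2) \<le> norm (of_nat n ^ 2 + a ^ 2 :: complex)"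
proof (cases "n = 0")
  case False
  have "(real n)^2 * (1 - (norm a)^2) \<le> (real n)^2 - (norm a)^2"
    using False by (simp add: algebra_simps mult_le_cancel_right1)
  also have "\<dots> \<le> norm (of_nat n ^ 2 + a ^ 2 :: complex)"
    by (metis norm_diff_ineq norm_of_nat norm_power)
  finally show ?thesis .
qed simp

lemma of_nat_sq_add_sq_nonzero:
  assumes "norm a < 1" "n > 0"
  shows "of_nat n ^ 2 + a ^ 2 \<noteq> (0 :: complex)"
proof -
  have "0 < (real n)^2 * (1 - (norm a)^2)"
    using assms by (simp add: abs_square_less_1)
  thus ?thesis
    using norm_of_nat_sq_add_sq_ge[of n a] by auto
qed

function sol_coeff :: "complex \<Rightarrow> nat \<Rightarrow> complex" where
  "sol_coeff a n = (if n = 0 then 0 else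
     fps_ode_rhs (Abs_fps (\<lambda>k. if k < n then sol_coeff a k else 0)) $ n / (of_nat n ^ 2 + a ^ 2))"
  by auto
termination by (relation "Wellfounded.measure snd") auto

declare sol_coeff.simps [simp del]

definition formal_solution :: "complex \<Rightarrow> complex fps" where
  "formal_solution a = Abs_fps (sol_coeff a)"

lemma formal_solution_nth:
  "formal_solution a $ n = (if n = 0 then 0 else
     fps_ode_rhs (fps_cutoff n (formal_solution a)) $ n / (of_nat n ^ 2 + a ^ 2))"
proof -
  have "fps_cutoff n (formal_solution a) = Abs_fps (\<lambda>k. if k < n then sol_coeff a k else 0)"
    by (simp add: fps_eq_iff formal_solution_def)
  thus ?thesis
    by (simp add: formal_solution_def sol_coeff.simps[of a n])
qed

lemma formal_solution_nth_0 [simp]: "formal_solution a $ 0 = 0"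
  by (simp add: formal_solution_nth)

lemma formal_solution_solves:
  assumes "norm a < 1"
  shows "fps_ode_lhs a (formal_solution a) = fps_ode_rhs (formal_solution a)"
proof (rule fps_ext)
  fix n
  show "fps_ode_lhs a (formal_solution a) $ n = fps_ode_rhs (formal_solution a) $ n"
  proof (cases "n = 0")
    case True
    thus ?thesis by (simp add: fps_ode_lhs_nth fps_ode_rhs_nth)
  next
    case False
    thus ?thesis
      using of_nat_sq_add_sq_nonzero[OF assms, of n]
      by (simp add: fps_ode_lhs_nth formal_solution_nth[of a n] fps_ode_rhs_cutoff)
  qed
qed

lemma formal_solution_unique:
  assumes "norm a < 1" "fps_ode_lhs a F = fps_ode_rhs F" "F $ 0 = 0"
  shows "F = formal_solution a"
proof -
  define S where "S = formal_solution a"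
  have S: "fps_ode_lhs a S = fps_ode_rhs S" "S $ 0 = 0"
    using formal_solution_solves[OF assms(1)] by (simp_all add: S_def)
  have "F $ n = S $ n" for n
  proof (induction n rule: less_induct)
    case (less n)
    show ?case
    proof (cases "n = 0")
      case True
      thus ?thesis using assms(3) S(2) by simp
    next
      case False
      have "fps_cutoff n F = fps_cutoff n S"
        using less.IH by (simp add: fps_cutoff_eq_fps_cutoff_iff)
      hence "fps_ode_rhs F $ n = fps_ode_rhs S $ n"
        by (metis fps_ode_rhs_cutoff assms(3) S(2))
      hence "(of_nat n ^ 2 + a ^ 2) * F $ n = (of_nat n ^ 2 + a ^ 2) * S $ n"
        using assms(2) S(1) by (metis fps_ode_lhs_nth)
      thus ?thesis
        using of_nat_sq_add_sq_nonzero[OF assms(1)] False by simp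
    qed
  qed
  thus ?thesis by (simp add: fps_eq_iff S_def)
qed

subsection \<open>Convergence of the formal solution\<close>

lemma sum_inverse_squares_le: "(\<Sum>j\<le>n. 1 / (real j)^2) \<le> 2"
proof -
  have telescope: "(\<Sum>j\<le>n. 1 / (real j)^2) \<le> 2 - 1 / real n" if "n \<ge> 1" for n
    using that
  proof (induction n rule: nat_induct_at_least)
    case base
    have "{..1::nat} = {0, 1}" by auto
    thus ?case by simp
  next
    case (Suc n)
    have "1 / (real n + 1)^2 + 1 / (real n + 1) \<le> 1 / real n"
      using Suc.hyps by (simp add: field_simps power2_eq_square divide_le_eq add_pos_nonneg)
    thus ?case
      using Suc.IH by (simp add: add.commute)
  qed
  show ?thesis
  proof (cases "n = 0")
    case False
    hence "(\<Sum>j\<le>n. 1 / (real j)^2) \<le> 2 - 1 / real n" by (intro telescope) simp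
    also have "\<dots> \<le> 2" by simp
    finally show ?thesis .
  qed simp
qed

text \<open>\<open>(x + y)\<^sup>2 \<le> 2 (x\<^sup>2 + y\<^sup>2)\<close> splits the convolution into two sums of inverse squares;
  the summands \<open>i = 0\<close> and \<open>i = n\<close> are \<open>0\<close> since \<open>x / 0 = 0\<close>.\<close>

lemma sum_inverse_squares_convolution_le:
  "(\<Sum>i\<le>n. 1 / ((real i)^2 * (real (n - i))^2)) \<le> 8 / (real n)^2"
proof (cases "n = 0")
  case False
  have split: "(real n)^2 * (1 / ((real i)^2 * (real (n - i))^2)) \<le> 2 / (real i)^2 + 2 / (real (n - i))^2"
    if "i \<le> n" for i
  proof (cases "i = 0 \<or> i = n")
    case False
    define x y where "x = real i" and "y = real (n - i)"
    have "x > 0" "y > 0" "real n = x + y"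
      using False that by (auto simp: x_def y_def)
    moreover have "(x + y)^2 \<le> 2 * (x^2 + y^2)"
      using sum_squares_ge_zero[of "x - y" 0] by (simp add: power2_eq_square algebra_simps)
    ultimately show ?thesis
      by (simp add: x_def[symmetric] y_def[symmetric] field_simps)
  qed auto
  have "(real n)^2 * (\<Sum>i\<le>n. 1 / ((real i)^2 * (real (n - i))^2))
        \<le> (\<Sum>i\<le>n. 2 / (real i)^2 + 2 / (real (n - i))^2)"
    unfolding sum_distrib_left by (intro sum_mono split) simp
  also have "\<dots> = 2 * (\<Sum>i\<le>n. 1 / (real i)^2) + 2 * (\<Sum>i\<le>n. 1 / (real (n - i))^2)"
    by (simp add: sum.distrib sum_distrib_left)
  also have "(\<Sum>i\<le>n. 1 / (real (n - i))^2) = (\<Sum>i\<le>n. 1 / (real i)^2)"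
    by (rule sum.reindex_bij_witness[of _ "\<lambda>i. n - i" "\<lambda>i. n - i"]) auto
  also have "2 * (\<Sum>i\<le>n. 1 / (real i)^2) + 2 * (\<Sum>i\<le>n. 1 / (real i)^2) \<le> 8"
    using sum_inverse_squares_le[of n] by simp
  finally show ?thesis
    using False by (simp add: field_simps)
qed simp

text \<open>At \<open>k = 0\<close> the bound reads \<open>norm (F $ 0) \<le> 0\<close>, because \<open>x / 0 = 0\<close>.\<close>

definition coeff_bound :: "real \<Rightarrow> real \<Rightarrow> complex fps \<Rightarrow> bool" where
  "coeff_bound M C F \<longleftrightarrow> (\<forall>k. norm (F $ k) \<le> C * M ^ k / (real k)^2)"

lemma coeff_bound_imp_norm_le:
  assumes "coeff_bound M C F" "C \<ge> 0" "M \<ge> 0"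
  shows "norm (F $ k) \<le> C * M ^ k"
proof -
  have "0 \<le> C * M ^ k"
    using assms(2,3) by simp
  hence "C * M ^ k / (real k)^2 \<le> C * M ^ k"
    by (cases "k = 0") (auto simp: divide_le_eq intro!: mult_le_cancel_left1[THEN iffD2])
  thus ?thesis
    using assms(1) order_trans unfolding coeff_bound_def by blast
qed

lemma coeff_bound_mono: "coeff_bound M C F \<Longrightarrow> C \<le> C' \<Longrightarrow> M \<ge> 0 \<Longrightarrow> coeff_bound M C' F"
  unfolding coeff_bound_def by (meson divide_right_mono mult_right_mono order_trans zero_le_power zero_le_power2)

lemma coeff_bound_convolution:
  assumes "coeff_bound M A F" "coeff_bound M B G" "A \<ge> 0" "B \<ge> 0" "M \<ge> 0"
  shows "(\<Sum>i\<le>n. norm (F $ i) * norm (G $ (n - i))) \<le> 8 * A * B * M ^ n / (real n)^2"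
proof -
  have "(\<Sum>i\<le>n. norm (F $ i) * norm (G $ (n - i)))
        \<le> (\<Sum>i\<le>n. (A * M ^ i / (real i)^2) * (B * M ^ (n - i) / (real (n - i))^2))"
    using assms unfolding coeff_bound_def by (intro sum_mono mult_mono) (auto simp del: of_nat_diff)
  also have "\<dots> = A * B * M ^ n * (\<Sum>i\<le>n. 1 / ((real i)^2 * (real (n - i))^2))"
    unfolding sum_distrib_left
  proof (rule sum.cong)
    fix i assume "i \<in> {..n}"
    hence "M ^ i * M ^ (n - i) = M ^ n" by (simp flip: power_add)
    thus "A * M ^ i / (real i)^2 * (B * M ^ (n - i) / (real (n - i))^2) =
          A * B * M ^ n * (1 / ((real i)^2 * (real (n - i))^2))"
      by (simp add: field_simps)
  qed simp
  also have "\<dots> \<le> A * B * M ^ n * (8 / (real n)^2)"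
    using assms by (intro mult_left_mono sum_inverse_squares_convolution_le) auto
  finally show ?thesis by (simp add: mult_ac)
qed

lemma coeff_bound_mult:
  assumes "coeff_bound M A F" "coeff_bound M B G" "A \<ge> 0" "B \<ge> 0" "M \<ge> 0"
  shows "coeff_bound M (8 * A * B) (F * G)"
  unfolding coeff_bound_def
proof
  fix n
  have "norm ((F * G) $ n) \<le> (\<Sum>i\<le>n. norm (F $ i) * norm (G $ (n - i)))"
    unfolding fps_mult_nth atLeast0AtMost by (rule order_trans[OF norm_sum]) (simp add: norm_mult)
  also have "\<dots> \<le> 8 * A * B * M ^ n / (real n)^2"
    by (rule coeff_bound_convolution[OF assms])
  finally show "norm ((F * G) $ n) \<le> 8 * A * B * M ^ n / (real n)^2" .
qed

lemma norm_cube_coeff_le: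
  assumes "coeff_bound M 1 T" "M \<ge> 1"
  shows "norm (((1 + T)^3) $ m) \<le> 92 * M ^ m"
proof -
  have M: "M \<ge> 0" "1 \<le> M ^ m"
    using assms(2) by simp_all
  have T2: "coeff_bound M 8 (T * T)"
    using coeff_bound_mult[OF assms(1) assms(1)] M by simp
  have T3: "coeff_bound M 64 (T * T * T)"
    using coeff_bound_mult[OF T2 assms(1)] M by simp
  have "(1 + T)^3 = 1 + 3 * T + 3 * (T * T) + T * T * T"
    by (simp add: power3_eq_cube algebra_simps)
  hence "norm (((1 + T)^3) $ m) \<le> norm ((1 :: complex fps) $ m) + 3 * norm (T $ m) + 3 * norm ((T * T) $ m) + norm ((T * T * T) $ m)"
    by (simp add: norm_mult order_trans[OF norm_triangle_ineq] add_mono)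
  also have "\<dots> \<le> M ^ m + 3 * M ^ m + 3 * (8 * M ^ m) + 64 * M ^ m"
    using coeff_bound_imp_norm_le[OF assms(1)] coeff_bound_imp_norm_le[OF T2] coeff_bound_imp_norm_le[OF T3] M
    by (intro add_mono mult_left_mono) auto
  finally show ?thesis by simp
qed

lemma norm_quadratic_coeff_le:
  assumes "coeff_bound M D F" "D \<ge> 0" "M \<ge> 0"
  shows "norm (\<Sum>i\<le>n. (of_nat i * of_nat (n - i) - of_nat (n - i) ^ 2) * F $ i * F $ (n - i))
           \<le> 8 * D^2 * M ^ n"
proof -
  have coeff: "norm (of_nat i * of_nat (n - i) - of_nat (n - i) ^ 2 :: complex) \<le> (real n)^2" if "i \<le> n" for i
  proof -
    have "(of_nat i * of_nat (n - i) - of_nat (n - i) ^ 2 :: complex) = of_real (real i * real (n - i) - real (n - i) ^ 2)"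
      by simp
    moreover have "\<bar>real i * real (n - i) - real (n - i) ^ 2\<bar> \<le> (real i + real (n - i))^2"
      by (simp add: abs_le_iff power2_eq_square algebra_simps)
    ultimately show ?thesis
      using that by (simp only: norm_of_real) (simp flip: of_nat_add)
  qed
  have "norm (\<Sum>i\<le>n. (of_nat i * of_nat (n - i) - of_nat (n - i) ^ 2) * F $ i * F $ (n - i))
      \<le> (\<Sum>i\<le>n. (real n)^2 * (norm (F $ i) * norm (F $ (n - i))))"
    by (rule order_trans[OF norm_sum], intro sum_mono) (auto simp: norm_mult mult.assoc intro!: mult_right_mono coeff simp del: of_nat_diff)
  also have "\<dots> \<le> (real n)^2 * (8 * D * D * M ^ n / (real n)^2)"
    unfolding sum_distrib_left[symmetric]
    by (intro mult_left_mono coeff_bound_convolution assms) auto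
  also have "\<dots> \<le> 8 * D^2 * M ^ n"
    using assms by (cases "n = 0") (auto simp: power2_eq_square)
  finally show ?thesis .
qed

lemma norm_fps_ode_rhs_coeff_le:
  assumes "coeff_bound M D T" "0 \<le> D" "D \<le> 1" "1 \<le> M" "n > 0"
  shows "norm (fps_ode_rhs T $ n) \<le> 92 * M ^ (n - 1) + 8 * D^2 * M ^ n"
  using assms norm_cube_coeff_le[OF coeff_bound_mono[OF assms(1,3)], of "n - 1"]
    norm_quadratic_coeff_le[OF assms(1,2), of n]
  by (simp add: fps_ode_rhs_nth order_trans[OF norm_triangle_ineq add_mono])

text \<open>\<open>D\<close> and \<open>M\<close> are chosen so that \<open>8 D\<^sup>2 M = 92\<close> and \<open>\<epsilon> D M = 184\<close>: the cubic and the
  quadratic part of the right-hand side then each contribute half of \<open>\<epsilon> D M\<^sup>n\<close>, and the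
  factor \<open>n\<^sup>2 \<epsilon>\<close> of the left-hand side restores the bound at \<open>n\<close>.\<close>

lemma formal_solution_coeff_bound:
  assumes "norm a < 1"
  defines "\<epsilon> \<equiv> 1 - (norm a)^2"
  defines "D \<equiv> \<epsilon> / 16" and "M \<equiv> 2944 / \<epsilon>^2"
  shows "coeff_bound M D (formal_solution a)"
proof -
  define S where "S = formal_solution a"
  have \<epsilon>: "0 < \<epsilon>" "\<epsilon> \<le> 1"
    using assms(1) by (simp_all add: \<epsilon>_def abs_square_less_1)
  have D: "0 \<le> D" "D \<le> 1"
    using \<epsilon> by (simp_all add: D_def)
  have M: "1 \<le> M"
    using \<epsilon> power_le_one[of \<epsilon> 2] by (simp add: M_def le_divide_eq)
  have balance: "92 * M ^ (n - 1) + 8 * D^2 * M ^ n = \<epsilon> * D * M ^ n" if "n > 0" for n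
  proof -
    have Mn: "M ^ n = M * M ^ (n - 1)"
      using that by (simp flip: power_Suc)
    have "92 * M ^ (n - 1) + 8 * D^2 * M ^ n = (92 + 8 * D^2 * M) * M ^ (n - 1)"
      by (simp add: Mn algebra_simps)
    also have "92 + 8 * D^2 * M = \<epsilon> * D * M"
      using \<epsilon> by (simp add: D_def M_def field_simps power2_eq_square)
    finally show ?thesis
      by (simp add: Mn)
  qed
  have "norm (S $ n) \<le> D * M ^ n / (real n)^2" for n
  proof (induction n rule: less_induct)
    case (less n)
    show ?case
    proof (cases "n = 0")
      case False
      define T where "T = fps_cutoff n S"
      have T: "coeff_bound M D T"
        using less.IH D M by (simp add: coeff_bound_def T_def)
      have "norm (fps_ode_rhs T $ n) \<le> 92 * M ^ (n - 1) + 8 * D^2 * M ^ n"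
        using T D M False by (intro norm_fps_ode_rhs_coeff_le) auto
      also have "\<dots> = \<epsilon> * D * M ^ n"
        by (rule balance) (use False in simp)
      finally have rhs: "norm (fps_ode_rhs T $ n) \<le> \<epsilon> * D * M ^ n" .
      have "norm (S $ n) = norm (fps_ode_rhs T $ n) / norm (of_nat n ^ 2 + a ^ 2 :: complex)"
        using False by (simp add: S_def T_def formal_solution_nth[of a n] norm_divide)
      also have "\<dots> \<le> \<epsilon> * D * M ^ n / ((real n)^2 * \<epsilon>)"
        using rhs norm_of_nat_sq_add_sq_ge[of n a] False \<epsilon> D M
        by (intro frac_le) (simp_all add: \<epsilon>_def)
      also have "\<dots> = D * M ^ n / (real n)^2"
        using \<epsilon> by simp
      finally show ?thesis .
    qed (simp add: S_def)
  qed
  thus ?thesis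
    by (simp add: coeff_bound_def S_def)
qed

lemma fps_conv_radius_ge_inverse:
  fixes F :: "complex fps"
  assumes "\<And>n. norm (F $ n) \<le> C * M ^ n" "M > 0"
  shows "ereal (1 / M) \<le> fps_conv_radius F"
  unfolding fps_conv_radius_def
proof (rule conv_radius_geI_ex')
  fix r :: real assume r: "0 < r" "ereal r < ereal (1 / M)"
  hence rM: "r * M < 1"
    using assms(2) by (simp add: field_simps)
  show "summable (\<lambda>n. F $ n * of_real r ^ n)"
  proof (rule summable_comparison_test')
    show "summable (\<lambda>n. C * (r * M) ^ n)"
      using r rM assms(2) by (intro summable_mult summable_geometric) simp
    show "norm (F $ n * of_real r ^ n) \<le> C * (r * M) ^ n" for n
      using assms(1)[of n] r
      by (simp add: norm_mult norm_power power_mult_distrib mult_right_mono mult.commute mult.left_commute)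
  qed
qed

lemma formal_solution_conv_radius:
  assumes "norm a < 1"
  shows "\<exists>r>0. ereal r \<le> fps_conv_radius (formal_solution a)"
proof -
  define \<epsilon> where "\<epsilon> = 1 - (norm a)^2"
  have \<epsilon>: "\<epsilon> > 0"
    using assms by (simp add: \<epsilon>_def abs_square_less_1)
  define D M where "D = \<epsilon> / 16" and "M = 2944 / \<epsilon>^2"
  have "coeff_bound M D (formal_solution a)"
    using formal_solution_coeff_bound[OF assms] by (simp add: \<epsilon>_def D_def M_def)
  hence "norm (formal_solution a $ n) \<le> D * M ^ n" for n
    by (rule coeff_bound_imp_norm_le) (use \<epsilon> in \<open>simp_all add: D_def M_def\<close>)
  hence "ereal (1 / M) \<le> fps_conv_radius (formal_solution a)"
    using \<epsilon> by (intro fps_conv_radius_ge_inverse) (auto simp: M_def)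
  thus ?thesis
    using \<epsilon> by (intro exI[of _ "1 / M"]) (auto simp: M_def)
qed

subsection \<open>Holomorphic solutions\<close>

lemma has_fps_expansion_euler_op:
  "f has_fps_expansion F \<Longrightarrow> euler_op f has_fps_expansion fps_euler F"
  unfolding euler_op_def fps_euler_def by (intro fps_expansion_intros)

lemma holomorphic_on_euler_op:
  "f holomorphic_on S \<Longrightarrow> open S \<Longrightarrow> euler_op f holomorphic_on S"
  unfolding euler_op_def by (intro holomorphic_intros holomorphic_deriv)

lemma has_fps_expansion_ode_lhs:
  "U has_fps_expansion F \<Longrightarrow> ode_lhs a U has_fps_expansion fps_ode_lhs a F"
  unfolding ode_lhs_def[abs_def] fps_ode_lhs_def by (intro fps_expansion_intros has_fps_expansion_euler_op)

lemma has_fps_expansion_ode_rhs: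
  "U has_fps_expansion F \<Longrightarrow> ode_rhs U has_fps_expansion fps_ode_rhs F"
  unfolding ode_rhs_def[abs_def] fps_ode_rhs_def by (intro fps_expansion_intros has_fps_expansion_euler_op)

lemma holomorphic_on_ode_lhs:
  "U holomorphic_on S \<Longrightarrow> open S \<Longrightarrow> ode_lhs a U holomorphic_on S"
  unfolding ode_lhs_def[abs_def] by (intro holomorphic_intros holomorphic_on_euler_op)

lemma holomorphic_on_ode_rhs:
  "U holomorphic_on S \<Longrightarrow> open S \<Longrightarrow> ode_rhs U holomorphic_on S"
  unfolding ode_rhs_def[abs_def] by (intro holomorphic_intros holomorphic_on_euler_op)

lemma has_fps_expansion_eq_on_ball:
  assumes "f holomorphic_on ball 0 r" "g holomorphic_on ball 0 r"
    and "f has_fps_expansion F" "g has_fps_expansion F" "x \<in> ball 0 r"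
  shows "f x = g x"
  using has_fps_expansion_imp_eval_fps_eq[of f F x r] has_fps_expansion_imp_eval_fps_eq[of g F x r] assms
  by simp

lemma solves_eq_iff_has_fps_expansion:
  assumes "norm a < 1" "r > 0" "U holomorphic_on ball 0 r"
  shows "solves_eq a U (ball 0 r) \<and> U 0 = 0 \<longleftrightarrow> U has_fps_expansion formal_solution a"
proof
  assume sol: "solves_eq a U (ball 0 r) \<and> U 0 = 0"
  define F where "F = fps_expansion U 0"
  have U: "U has_fps_expansion F"
    unfolding F_def using assms(2,3) by (intro has_fps_expansion_fps_expansion[of "ball 0 r"]) auto
  have "eventually (\<lambda>x. x \<in> ball 0 r) (nhds 0)"
    using assms(2) by (intro eventually_nhds_in_open) auto
  hence "eventually (\<lambda>x. ode_rhs U x = ode_lhs a U x) (nhds 0)"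
    using sol unfolding solves_eq_iff by (auto elim!: eventually_mono)
  hence "ode_lhs a U has_fps_expansion fps_ode_rhs F"
    using has_fps_expansion_ode_rhs[OF U] has_fps_expansion_cong by blast
  hence "fps_ode_lhs a F = fps_ode_rhs F"
    using has_fps_expansion_ode_lhs[OF U] fps_expansion_unique_complex by blast
  moreover have "F $ 0 = 0"
    using has_fps_expansion_imp_0_eq_fps_nth_0[OF U] sol by simp
  ultimately show "U has_fps_expansion formal_solution a"
    using formal_solution_unique[OF assms(1)] U by simp
next
  assume U: "U has_fps_expansion formal_solution a"
  have "ode_lhs a U x = ode_rhs U x" if "x \<in> ball 0 r" for x
  proof (rule has_fps_expansion_eq_on_ball[OF _ _ _ _ that])
    show "ode_lhs a U holomorphic_on ball 0 r" "ode_rhs U holomorphic_on ball 0 r"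
      using assms(3) by (simp_all add: holomorphic_on_ode_lhs holomorphic_on_ode_rhs)
    show "ode_lhs a U has_fps_expansion fps_ode_rhs (formal_solution a)"
      using has_fps_expansion_ode_lhs[OF U, of a] formal_solution_solves[OF assms(1)] by simp
    show "ode_rhs U has_fps_expansion fps_ode_rhs (formal_solution a)"
      by (rule has_fps_expansion_ode_rhs[OF U])
  qed
  moreover have "U 0 = 0"
    using has_fps_expansion_imp_0_eq_fps_nth_0[OF U] by simp
  ultimately show "solves_eq a U (ball 0 r) \<and> U 0 = 0"
    by (simp add: solves_eq_iff)
qed

theorem lemma2:
  fixes a :: complex
  assumes "norm a < 1"
  shows "\<exists>U r. r > 0 \<and> U holomorphic_on ball 0 r \<and> U 0 = 0 \<and> solves_eq a U (ball 0 r) \<and>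
     (\<forall>V s. s > 0 \<and> V holomorphic_on ball 0 s \<and> V 0 = 0 \<and> solves_eq a V (ball 0 s)
        \<longrightarrow> (\<forall>x\<in>ball 0 (min r s). V x = U x))"
proof -
  obtain r where r: "r > 0" "ereal r \<le> fps_conv_radius (formal_solution a)"
    using formal_solution_conv_radius[OF assms] by blast
  define U where "U = eval_fps (formal_solution a)"
  have hol: "U holomorphic_on ball 0 r"
    unfolding U_def using r(2) by (intro holomorphic_on_eval_fps) (auto dest: ball_eball_mono)
  have exp: "U has_fps_expansion formal_solution a"
    unfolding U_def using r by (intro eval_fps_has_fps_expansion) (simp add: less_le_trans[of 0 "ereal r"])
  have "V x = U x"
    if V: "s > 0" "V holomorphic_on ball 0 s" "V 0 = 0" "solves_eq a V (ball 0 s)"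
      and x: "x \<in> ball 0 (min r s)" for V s x
  proof (rule has_fps_expansion_eq_on_ball[OF _ _ _ exp x])
    show "V holomorphic_on ball 0 (min r s)"
      by (rule holomorphic_on_subset[OF V(2)]) auto
    show "U holomorphic_on ball 0 (min r s)"
      by (rule holomorphic_on_subset[OF hol]) auto
    show "V has_fps_expansion formal_solution a"
      using solves_eq_iff_has_fps_expansion[OF assms V(1,2)] V(3,4) by blast
  qed
  thus ?thesis
    using r(1) hol exp solves_eq_iff_has_fps_expansion[OF assms r(1) hol] by blast
qed

end
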